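(* Let $\rho$ be a one-qubit density matrix parameterized as $\rho=\rho(x,y,z)=\begin{pmatrix}\frac{1+z}{2}&\frac{x-iy}{2}\\ \frac{x+iy}{2}&\frac{1-z}{2}\end{pmatrix}$ with $x,y,z\in\mathbb{R}$, $r=\sqrt{x^2+y^2+z^2}<1$. Define the transformation from $\rho$ to $\hat{\rho}$ by \[ \hat{\rho}=-\log \rho + \frac{1}{2} \log \frac{1-r^2}{4}\cdot I \] and define \[ u=-\frac{\partial}{\partial x} \mathrm{Tr}\, \rho \log \rho,\quad v=-\frac{\partial}{\partial y} \mathrm{Tr}\, \rho \log \rho,\quad w=-\frac{\partial}{\partial z} \mathrm{Tr}\, \rho \log \rho . \] Then $\hat{\rho}$ can be expressed as \[ \hat{\rho}(u,v,w)=\begin{pmatrix} w& u-iv\\ u+iv & -w\end{pmatrix}. \]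
   Context: For a Hermitian matrix $\rho=U\,\mathrm{diag}(\lambda_1,\ldots,\lambda_d)\,U^*$ with $U$ unitary and a function $f:\mathbb{R}\to\mathbb{R}$, $f(\rho)$ is defined as $U\,\mathrm{diag}(f(\lambda_1),\ldots,f(\lambda_d))\,U^*$; in particular $\log\rho$ is defined this way. The one-qubit state space is the Bloch ball $x^2+y^2+z^2\le 1$; the eigenvalues of $\rho(x,y,z)$ are $\frac{1\pm r}{2}$, so $\log\rho$ is defined for $r<1$. $I$ is the $2\times 2$ identity matrix. *)

theory Defs
  imports "HOL-Analysis.Analysis"
begin

definition cadj :: "complex^2^2 \<Rightarrow> complex^2^2" where
  "cadj U = (\<chi> i j. cnj (U $ j $ i))"

definition unitary2 :: "complex^2^2 \<Rightarrow> bool" where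
  "unitary2 U \<longleftrightarrow> U ** cadj U = mat 1 \<and> cadj U ** U = mat 1"

definition cdiag :: "(2 \<Rightarrow> real) \<Rightarrow> complex^2^2" where
  "cdiag d = (\<chi> i j. if i = j then complex_of_real (d i) else 0)"

definition matfun :: "(real \<Rightarrow> real) \<Rightarrow> complex^2^2 \<Rightarrow> complex^2^2" where
  "matfun f A = (SOME M. \<exists>U d. unitary2 U \<and> A = U ** cdiag d ** cadj U
                     \<and> M = U ** cdiag (\<lambda>i. f (d i)) ** cadj U)"

definition mlog :: "complex^2^2 \<Rightarrow> complex^2^2" where
  "mlog A = matfun ln A"

definition mat2 :: "complex \<Rightarrow> complex \<Rightarrow> complex \<Rightarrow> complex \<Rightarrow> complex^2^2" where
  "mat2 a b c d = (\<chi> i j. if i = 1 then (if j = 1 then a else b) else (if j = 1 then c else d))"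

definition qubit :: "real \<Rightarrow> real \<Rightarrow> real \<Rightarrow> complex^2^2" where
  "qubit x y z = mat2 ((1 + z) / 2) (Complex x (- y) / 2) (Complex x y / 2) ((1 - z) / 2)"

text \<open>Tr (rho log rho) as a function of the Bloch coordinates (it is real; we take the real part).\<close>
definition trlog :: "real \<Rightarrow> real \<Rightarrow> real \<Rightarrow> real" where
  "trlog x y z = Re (trace (qubit x y z ** mlog (qubit x y z)))"

end

theory Submission
  imports Defs
begin

text \<open>The state \<open>\<rho>\<close> has the eigenvalues \<open>(1 \<plusminus> r)/2\<close>, and on this two-point spectrum \<open>ln\<close>
  coincides with an affine function. Hence \<open>log \<rho>\<close> is affine in \<open>\<rho>\<close>:
  \<open>log \<rho> = \<onehalf> ln ((1 - r\<^sup>2)/4) I + (artanh r / r) (x \<sigma>\<^sub>x + y \<sigma>\<^sub>y + z \<sigma>\<^sub>z)\<close>.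
  Consequently \<open>Tr \<rho> log \<rho> = \<onehalf> ln ((1 - r\<^sup>2)/4) + r artanh r\<close> depends on \<open>r\<close> only, its derivative
  in \<open>r\<close> is \<open>artanh r\<close>, so its gradient is \<open>(artanh r / r) (x, y, z)\<close>, and comparing the two
  formulas gives the claim.\<close>

lemma conj_diag_entry:
  fixes U :: "complex^2^2"
  shows "(U ** cdiag d ** cadj U) $ i $ j = (\<Sum>k\<in>UNIV. U$i$k * of_real (d k) * cnj (U$j$k))"
  by (simp add: matrix_matrix_mult_def cadj_def cdiag_def if_distrib sum_distrib_right cong: if_cong)

lemma unitary2_rows_orthonormal:
  assumes "unitary2 U"
  shows "(\<Sum>k\<in>UNIV. U$i$k * cnj (U$j$k)) = (if i = j then 1 else 0)"
proof -
  have "(U ** cadj U) $ i $ j = (if i = j then 1 else 0)"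
    using assms by (simp add: unitary2_def mat_def)
  then show ?thesis by (simp add: matrix_matrix_mult_def cadj_def)
qed

lemma conj_diag_affine:
  fixes U :: "complex^2^2"
  assumes "unitary2 U"
  shows "U ** cdiag (\<lambda>k. a + b * d k) ** cadj U = mat (of_real a) + b *\<^sub>R (U ** cdiag d ** cadj U)"
proof -
  have "(U ** cdiag (\<lambda>k. a + b * d k) ** cadj U) $ i $ j
        = of_real a * (\<Sum>k\<in>UNIV. U$i$k * cnj (U$j$k)) + of_real b * (U ** cdiag d ** cadj U) $ i $ j"
    for i j
    by (simp add: conj_diag_entry sum.distrib sum_distrib_left algebra_simps)
  then show ?thesis
    by (simp add: vec_eq_iff unitary2_rows_orthonormal[OF assms] mat_def of_real_def)
qed

lemma matfun_eq_affine:
  assumes "\<exists>U d. unitary2 U \<and> A = U ** cdiag d ** cadj U"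
    and "\<And>U d k. unitary2 U \<Longrightarrow> A = U ** cdiag d ** cadj U \<Longrightarrow> f (d k) = a + b * d k"
  shows "matfun f A = mat (of_real a) + b *\<^sub>R A"
proof -
  let ?P = "\<lambda>M. \<exists>U d. unitary2 U \<and> A = U ** cdiag d ** cadj U
                     \<and> M = U ** cdiag (\<lambda>k. f (d k)) ** cadj U"
  \<comment> \<open>\<open>matfun\<close> picks an arbitrary diagonalisation; an affine \<open>f\<close> makes the choice irrelevant.\<close>
  have "?P (SOME M. ?P M)"
    by (rule someI_ex) (use assms(1) in blast)
  then obtain U d where U: "unitary2 U" and A: "A = U ** cdiag d ** cadj U"
    and M: "(SOME M. ?P M) = U ** cdiag (\<lambda>k. f (d k)) ** cadj U"
    by blast
  have "(\<lambda>k. f (d k)) = (\<lambda>k. a + b * d k)"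
    using assms(2)[OF U A] by blast
  then have "matfun f A = U ** cdiag (\<lambda>k. a + b * d k) ** cadj U"
    unfolding matfun_def M by simp
  then show ?thesis
    by (simp add: conj_diag_affine[OF U] A)
qed

lemma trace_conj_diag:
  fixes U :: "complex^2^2"
  assumes "unitary2 U"
  shows "trace (U ** cdiag d ** cadj U) = of_real (d 1 + d 2)"
proof -
  have "trace (U ** cdiag d ** cadj U) = trace (cdiag d ** (cadj U ** U))"
    by (metis matrix_mul_assoc trace_mul_sym)
  also have "\<dots> = trace (cdiag d)"
    using assms by (simp add: unitary2_def)
  finally show ?thesis
    by (simp add: trace_def sum_2 cdiag_def)
qed

lemma det_conj_diag:
  fixes U :: "complex^2^2"
  assumes "unitary2 U"
  shows "det (U ** cdiag d ** cadj U) = of_real (d 1 * d 2)"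
proof -
  have "det U * det (cadj U) = 1"
    using assms by (metis det_mul det_I unitary2_def)
  moreover have "det (cdiag d) = of_real (d 1 * d 2)"
    by (simp add: det_2 cdiag_def)
  ultimately show ?thesis
    by (simp add: det_mul)
qed

lemma conj_diag_eigenvalue_root:
  fixes U :: "complex^2^2"
  assumes "unitary2 U" and "A = U ** cdiag d ** cadj U"
  shows "of_real (d k) ^ 2 - trace A * of_real (d k) + det A = 0"
proof -
  have "d k ^ 2 - (d 1 + d 2) * d k + d 1 * d 2 = 0"
    using exhaust_2[of k] by (auto simp: power2_eq_square algebra_simps)
  then have "of_real (d k ^ 2 - (d 1 + d 2) * d k + d 1 * d 2) = (0::complex)"
    by simp
  then show ?thesis
    using assms by (simp add: trace_conj_diag det_conj_diag)
qed

lemma eq_mat2_iff: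
  "A = mat2 a b c d \<longleftrightarrow> A$1$1 = a \<and> A$1$2 = b \<and> A$2$1 = c \<and> A$2$2 = d"
  by (auto simp: vec_eq_iff forall_2 mat2_def)

lemma mat2_entries [simp]:
  "mat2 a b c d $ 1 $ 1 = a" "mat2 a b c d $ 1 $ 2 = b"
  "mat2 a b c d $ 2 $ 1 = c" "mat2 a b c d $ 2 $ 2 = d"
  by (simp_all add: mat2_def)

lemma conj_diag_mat2:
  fixes U :: "complex^2^2"
  shows "U ** cdiag d ** cadj U = mat2
     (U$1$1 * d 1 * cnj (U$1$1) + U$1$2 * d 2 * cnj (U$1$2))
     (U$1$1 * d 1 * cnj (U$2$1) + U$1$2 * d 2 * cnj (U$2$2))
     (U$2$1 * d 1 * cnj (U$1$1) + U$2$2 * d 2 * cnj (U$1$2))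
     (U$2$1 * d 1 * cnj (U$2$1) + U$2$2 * d 2 * cnj (U$2$2))"
  by (simp add: eq_mat2_iff conj_diag_entry sum_2)

lemma unitary2_mat2:
  assumes "cmod a ^ 2 + cmod b ^ 2 = 1"
  shows "unitary2 (mat2 a (- cnj b) b (cnj a))"
proof -
  have "a * cnj a + b * cnj b = 1" "cnj a * a + cnj b * b = 1"
    using assms[unfolded cmod_power2]
    by (simp_all add: complex_mult_cnj mult.commute flip: of_real_add of_real_power)
  then show ?thesis
    by (simp add: unitary2_def vec_eq_iff forall_2 matrix_matrix_mult_def sum_2 cadj_def mat2_def
        mat_def algebra_simps)
qed

lemma qubit_entries [simp]:
  "qubit x y z $ 1 $ 1 = (1 + z) / 2" "qubit x y z $ 1 $ 2 = Complex x (- y) / 2"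
  "qubit x y z $ 2 $ 1 = Complex x y / 2" "qubit x y z $ 2 $ 2 = (1 - z) / 2"
  by (simp_all add: qubit_def)

lemma trace_qubit: "trace (qubit x y z) = 1"
  by (simp add: trace_def sum_2 add_divide_distrib[symmetric])

lemma det_qubit: "det (qubit x y z) = of_real ((1 - (x^2 + y^2 + z^2)) / 4)"
  by (simp add: det_2 complex_eq_iff field_simps power2_eq_square)

lemma qubit_eigenvalues:
  assumes "unitary2 U" and "qubit x y z = U ** cdiag d ** cadj U"
  shows "d k = (1 + sqrt (x^2 + y^2 + z^2)) / 2 \<or> d k = (1 - sqrt (x^2 + y^2 + z^2)) / 2"
proof -
  let ?r = "sqrt (x^2 + y^2 + z^2)"
  have "of_real (d k ^ 2 - d k + (1 - ?r^2) / 4) = (0::complex)"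
    using conj_diag_eigenvalue_root[OF assms] by (simp add: trace_qubit det_qubit)
  then have "d k ^ 2 - d k + (1 - ?r^2) / 4 = 0"
    by (simp only: of_real_eq_0_iff)
  moreover have "(2 * d k - 1)^2 - ?r^2 = 4 * (d k ^ 2 - d k + (1 - ?r^2) / 4)"
    by (simp add: power2_eq_square field_simps)
  ultimately have "(2 * d k - 1)^2 = ?r^2"
    by simp
  then have "2 * d k - 1 = ?r \<or> 2 * d k - 1 = - ?r"
    using power2_eq_iff by blast
  then show ?thesis
    by auto
qed

lemma conj_diag_unitary_mat2:
  "mat2 a (- cnj b) b (cnj a) ** cdiag d ** cadj (mat2 a (- cnj b) b (cnj a)) = mat2
     (of_real (cmod a ^ 2 * d 1 + cmod b ^ 2 * d 2)) (a * cnj b * of_real (d 1 - d 2))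
     (b * cnj a * of_real (d 1 - d 2)) (of_real (cmod b ^ 2 * d 1 + cmod a ^ 2 * d 2))"
  unfolding conj_diag_mat2 eq_mat2_iff
  by (simp add: complex_eq_iff cmod_power2) (simp add: algebra_simps power2_eq_square)

lemma qubit_unitarily_diagonalisable:
  "\<exists>U d. unitary2 U \<and> qubit x y z = U ** cdiag d ** cadj U"
proof (cases "x = 0 \<and> y = 0")
  case True
  have "unitary2 (mat2 1 (- cnj 0) 0 (cnj 1))"
    by (rule unitary2_mat2) simp
  moreover have "qubit x y z = mat2 1 (- cnj 0) 0 (cnj 1) ** cdiag (\<lambda>k. if k = 1 then (1 + z) / 2 else (1 - z) / 2)
                               ** cadj (mat2 1 (- cnj 0) 0 (cnj 1))"
    using True by (simp only: conj_diag_unitary_mat2) (simp add: eq_mat2_iff complex_eq_iff)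
  ultimately show ?thesis
    by blast
next
  case False
  define r where "r = sqrt (x^2 + y^2 + z^2)"
  have "x^2 + y^2 > 0"
    using False by (simp add: sum_power2_gt_zero_iff)
  then have "\<bar>z\<bar> < r"
    unfolding r_def by (simp add: real_less_rsqrt)
  then have r: "0 < r" "0 < r + z"
    by linarith+
  \<comment> \<open>\<open>(a, b)\<close> is the unit eigenvector for \<open>(1 + r)/2\<close>, proportional to \<open>(r + z, x + i y)\<close>.\<close>
  define N where "N = sqrt (2 * r * (r + z))"
  have N2: "N^2 = 2 * r * (r + z)" and N: "0 < N"
    unfolding N_def using r by simp_all
  define a where "a = (r + z) / N"
  define b where "b = Complex (x / N) (y / N)"
  have r2: "x^2 + y^2 = (r - z) * (r + z)"
    unfolding r_def by (simp add: algebra_simps power2_eq_square)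
  have a2: "a^2 = (r + z) / (2 * r)"
    unfolding a_def power_divide N2 using r by (simp add: power2_eq_square)
  have b2: "cmod b ^ 2 = (r - z) / (2 * r)"
    unfolding b_def cmod_power2 using r by (simp add: power_divide add_divide_distrib[symmetric] r2 N2)
  have ab: "b * complex_of_real a = Complex x y / (2 * r)"
    unfolding a_def b_def using r N by (simp add: complex_eq_iff N2[unfolded power2_eq_square])
  have ab_cnj: "complex_of_real a * cnj b = Complex x (- y) / (2 * r)"
    unfolding a_def b_def using r N by (simp add: complex_eq_iff N2[unfolded power2_eq_square])
  have "unitary2 (mat2 a (- cnj b) b (cnj a))"
    by (rule unitary2_mat2) (use r in \<open>simp add: a2 b2 add_divide_distrib[symmetric]\<close>)
  moreover have "qubit x y z = mat2 a (- cnj b) b (cnj a) ** cdiag (\<lambda>k. if k = 1 then (1 + r) / 2 else (1 - r) / 2)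
                               ** cadj (mat2 a (- cnj b) b (cnj a))"
    unfolding conj_diag_unitary_mat2 eq_mat2_iff
    using r by (simp add: a2 b2 ab ab_cnj) (simp add: field_simps)
  ultimately show ?thesis
    by blast
qed

text \<open>\<open>pauli_dot x y z = x \<sigma>\<^sub>x + y \<sigma>\<^sub>y + z \<sigma>\<^sub>z\<close>, so that \<open>qubit x y z = (I + pauli_dot x y z) / 2\<close>.\<close>

definition pauli_dot :: "real \<Rightarrow> real \<Rightarrow> real \<Rightarrow> complex^2^2" where
  "pauli_dot x y z = mat2 z (Complex x (- y)) (Complex x y) (- z)"

text \<open>For \<open>r = 0\<close> the slope \<open>artanh r / r\<close> is \<open>0\<close> by the convention \<open>x / 0 = 0\<close>; this is harmless,
  as both eigenvalues are then \<open>1/2\<close>.\<close>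

lemma ln_qubit_eigenvalue:
  fixes r t :: real
  assumes "0 \<le> r" "r < 1" and "t = (1 + r) / 2 \<or> t = (1 - r) / 2"
  shows "ln t = ln ((1 - r^2) / 4) / 2 + artanh r / r * (2 * t - 1)"
proof (cases "r = 0")
  case True
  have t: "t = 1 / 2"
    using True assms(3) by simp
  have "(1 - r^2) / 4 = t^2"
    unfolding t using True by (simp add: power2_eq_square)
  then have "ln ((1 - r^2) / 4) = 2 * ln t"
    by (simp add: ln_realpow)
  with True show ?thesis
    by simp
next
  case False
  have pos: "0 < (1 + r) / 2" "0 < (1 - r) / 2"
    using assms(1,2) by simp_all
  have "(1 - r^2) / 4 = (1 + r) / 2 * ((1 - r) / 2)"
    by (simp add: power2_eq_square field_simps)
  then have ln_det: "ln ((1 - r^2) / 4) = ln ((1 + r) / 2) + ln ((1 - r) / 2)"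
    using ln_mult_pos[OF pos] by (simp only:)
  have "(1 + r) / (1 - r) = ((1 + r) / 2) / ((1 - r) / 2)"
    using assms(2) by (simp add: field_simps)
  then have artanh: "artanh r = (ln ((1 + r) / 2) - ln ((1 - r) / 2)) / 2"
    using ln_divide_pos[OF pos] by (simp only: artanh_def)
  from assms(3) show ?thesis
  proof
    assume t: "t = (1 + r) / 2"
    show ?thesis
      unfolding t ln_det artanh using False by (simp add: field_simps)
  next
    assume t: "t = (1 - r) / 2"
    show ?thesis
      unfolding t ln_det artanh using False by (simp add: field_simps)
  qed
qed

lemma mlog_qubit:
  fixes x y z :: real
  defines "r \<equiv> sqrt (x^2 + y^2 + z^2)"
  assumes r_lt_1: "r < 1"
  shows "mlog (qubit x y z) = mat (of_real (ln ((1 - r^2) / 4) / 2)) + (artanh r / r) *\<^sub>R pauli_dot x y z"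
proof -
  define k where "k = artanh r / r"
  have "mlog (qubit x y z) = mat (of_real (ln ((1 - r^2) / 4) / 2 - k)) + (2 * k) *\<^sub>R qubit x y z"
    unfolding mlog_def
  proof (rule matfun_eq_affine[OF qubit_unitarily_diagonalisable])
    fix U d i
    assume "unitary2 U" and "qubit x y z = U ** cdiag d ** cadj U"
    then have "ln (d i) = ln ((1 - r^2) / 4) / 2 + k * (2 * d i - 1)"
      unfolding k_def using r_lt_1 by (intro ln_qubit_eigenvalue) (auto simp: r_def dest: qubit_eigenvalues)
    then show "ln (d i) = ln ((1 - r^2) / 4) / 2 - k + 2 * k * d i"
      by (simp add: algebra_simps)
  qed
  also have "\<dots> = mat (of_real (ln ((1 - r^2) / 4) / 2)) + k *\<^sub>R pauli_dot x y z"
    by (simp add: vec_eq_iff forall_2 mat_def pauli_dot_def complex_eq_iff field_simps)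
  finally show ?thesis
    by (simp add: k_def)
qed

text \<open>\<open>\<Sum> \<lambda> ln \<lambda>\<close> over the eigenvalues \<open>\<lambda> = (1 \<plusminus> r)/2\<close> of a state with Bloch radius \<open>r\<close>.\<close>

definition bloch_negentropy :: "real \<Rightarrow> real" where
  "bloch_negentropy r = ln ((1 - r^2) / 4) / 2 + r * artanh r"

lemma trlog_eq_bloch_negentropy:
  assumes "sqrt (x^2 + y^2 + z^2) < 1"
  shows "trlog x y z = bloch_negentropy (sqrt (x^2 + y^2 + z^2))"
proof -
  define r where "r = sqrt (x^2 + y^2 + z^2)"
  define k where "k = artanh r / r"
  have "trlog x y z = ln ((1 - r^2) / 4) / 2 + k * (x^2 + y^2 + z^2)"
    unfolding trlog_def mlog_qubit[OF assms, folded r_def, folded k_def]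
    by (simp add: trace_def matrix_matrix_mult_def sum_2 mat_def pauli_dot_def power2_eq_square
        field_simps)
  also have "x^2 + y^2 + z^2 = r^2"
    by (simp add: r_def)
  also have "k * r^2 = r * artanh r"
    by (cases "r = 0") (simp_all add: k_def power2_eq_square)
  finally show ?thesis
    by (simp add: bloch_negentropy_def r_def)
qed

lemma bloch_negentropy_has_real_derivative:
  assumes "\<bar>r\<bar> < 1"
  shows "(bloch_negentropy has_real_derivative artanh r) (at r)"
proof -
  have "r^2 < 1"
    using assms by (simp add: abs_square_less_1)
  then show ?thesis
    unfolding bloch_negentropy_def[abs_def] using assms
    by (auto intro!: derivative_eq_intros) (simp add: field_simps)
qed

lemma bloch_negentropy_abs:
  assumes "\<bar>r\<bar> < 1"
  shows "bloch_negentropy \<bar>r\<bar> = bloch_negentropy r"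
  using assms by (cases "0 \<le> r") (simp_all add: bloch_negentropy_def)

lemma bloch_negentropy_radial_has_real_derivative:
  fixes F :: "real \<Rightarrow> real"
  assumes "0 \<le> c" and "a^2 + c < 1"
    and F: "\<And>t. t^2 + c < 1 \<Longrightarrow> F t = bloch_negentropy (sqrt (t^2 + c))"
  shows "(F has_real_derivative artanh (sqrt (a^2 + c)) / sqrt (a^2 + c) * a) (at a)"
proof (cases "a^2 + c = 0")
  case True
  \<comment> \<open>\<open>sqrt\<close> is not differentiable at \<open>0\<close>, but near \<open>0\<close> the function \<open>F\<close> is the even \<open>bloch_negentropy\<close>.\<close>
  then have "a = 0" and "c = 0"
    using \<open>0 \<le> c\<close> by (simp_all add: add_nonneg_eq_0_iff)
  have "(bloch_negentropy has_real_derivative 0) (at 0)"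
    using bloch_negentropy_has_real_derivative[of 0] by simp
  then have "(F has_real_derivative 0) (at 0)"
    by (rule has_field_derivative_transform_within_open[where S = "{-1<..<1}"])
      (use F \<open>c = 0\<close> in \<open>auto simp: abs_square_less_1 bloch_negentropy_abs\<close>)
  then show ?thesis
    by (simp add: \<open>a = 0\<close> \<open>c = 0\<close>)
next
  case False
  let ?R = "sqrt (a^2 + c)"
  have "a^2 + c > 0"
    using False assms(1) by (simp add: add_nonneg_pos order_le_neq_trans)
  then have "((\<lambda>t. sqrt (t^2 + c)) has_real_derivative a / ?R) (at a)"
    by (auto intro!: derivative_eq_intros simp: field_simps)
  moreover have "\<bar>?R\<bar> < 1"
    using assms(2) \<open>a^2 + c > 0\<close> by simp
  ultimately have "((\<lambda>t. bloch_negentropy (sqrt (t^2 + c))) has_real_derivative artanh ?R * (a / ?R)) (at a)"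
    by (intro DERIV_chain2[OF bloch_negentropy_has_real_derivative])
  then have "((\<lambda>t. bloch_negentropy (sqrt (t^2 + c))) has_real_derivative artanh ?R / ?R * a) (at a)"
    by simp
  then show ?thesis
    by (rule has_field_derivative_transform_within_open[where S = "{t. t^2 + c < 1}"])
      (auto intro!: open_Collect_less continuous_intros simp: F assms(2))
qed

lemma trlog_has_partial_derivatives:
  fixes x y z :: real
  defines "r \<equiv> sqrt (x^2 + y^2 + z^2)"
  assumes "r < 1"
  shows "((\<lambda>t. trlog t y z) has_real_derivative artanh r / r * x) (at x)"
    and "((\<lambda>t. trlog x t z) has_real_derivative artanh r / r * y) (at y)"
    and "((\<lambda>t. trlog x y t) has_real_derivative artanh r / r * z) (at z)"
proof -
  have r: "x^2 + y^2 + z^2 < 1"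
    using assms(2) by (simp add: r_def)
  show "((\<lambda>t. trlog t y z) has_real_derivative artanh r / r * x) (at x)"
    using bloch_negentropy_radial_has_real_derivative[of "y^2 + z^2" x "\<lambda>t. trlog t y z"] r
    by (simp add: r_def trlog_eq_bloch_negentropy add.assoc)
  show "((\<lambda>t. trlog x t z) has_real_derivative artanh r / r * y) (at y)"
    using bloch_negentropy_radial_has_real_derivative[of "x^2 + z^2" y "\<lambda>t. trlog x t z"] r
    by (simp add: r_def trlog_eq_bloch_negentropy add_ac)
  show "((\<lambda>t. trlog x y t) has_real_derivative artanh r / r * z) (at z)"
    using bloch_negentropy_radial_has_real_derivative[of "x^2 + y^2" z "\<lambda>t. trlog x y t"] r
    by (simp add: r_def trlog_eq_bloch_negentropy add_ac)
qed

lemma scaleR_pauli_dot: "c *\<^sub>R pauli_dot x y z = pauli_dot (c * x) (c * y) (c * z)"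
  by (simp add: vec_eq_iff forall_2 pauli_dot_def mat2_def complex_eq_iff)

theorem mainTheorem6:
  fixes x y z :: real
  assumes "sqrt (x^2 + y^2 + z^2) < 1"
  shows "(\<lambda>t. trlog t y z) differentiable (at x)
       \<and> (\<lambda>t. trlog x t z) differentiable (at y)
       \<and> (\<lambda>t. trlog x y t) differentiable (at z)
       \<and> (let r = sqrt (x^2 + y^2 + z^2);
              u = - deriv (\<lambda>t. trlog t y z) x;
              v = - deriv (\<lambda>t. trlog x t z) y;
              w = - deriv (\<lambda>t. trlog x y t) z
          in - mlog (qubit x y z) + mat (complex_of_real ((1/2) * ln ((1 - r^2) / 4)))
             = mat2 (complex_of_real w) (Complex u (- v)) (Complex u v) (complex_of_real (- w)))"
proof -
  define r where "r = sqrt (x^2 + y^2 + z^2)"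
  define k where "k = artanh r / r"
  note partials = trlog_has_partial_derivatives[OF assms, folded r_def, folded k_def]
  have "- mlog (qubit x y z) + mat (of_real ((1/2) * ln ((1 - r^2) / 4))) = (- k) *\<^sub>R pauli_dot x y z"
    by (simp add: mlog_qubit[OF assms, folded r_def, folded k_def])
  also have "\<dots> = pauli_dot (- (k * x)) (- (k * y)) (- (k * z))"
    by (simp add: scaleR_pauli_dot)
  finally show ?thesis
    using partials by (auto simp: Let_def real_differentiable_def DERIV_imp_deriv pauli_dot_def
        r_def[symmetric])
qed

end
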